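(* Let $P=\{p_1,\dots,p_n\}\subset\mathbb{R}^d$ be a finite point set spanning $\mathbb{R}^d$ affinely. Let $M\colon\mathbb{R}^{dn}\to\mathbb{R}^{\binom n2}$, $(v_1,\dots,v_n)\mapsto(\langle v_i-v_j,p_i-p_j\rangle)_{i<j}$, and $\Delta\colon\mathbb{R}^{\binom n2}\to\mathbb{R}^{\mathcal C(P)}$, $(f_{ij})\mapsto\bigl(\sum_{i<j,\ i,j\in C}w^C_{ij}f_{ij}\bigr)_{C\in\mathcal C(P)}$. Then $\operatorname{Im}M\subseteq\ker\Delta$. If moreover $P$ contains $d$ affinely independent points whose affine hull contains no other point of $P$, then $\operatorname{Im}M=\ker\Delta$.
   Context: $\mathcal C(P)$ is the set of circuits of $P$, i.e. minimal affinely dependent subsets. For a circuit $C$ there is an affine dependence $\sum_{i\in C}\alpha_ip_i=0$, $\sum_{i\in C}\alpha_i=0$, unique up to scaling with all $\alpha_i\ne0$; set $w^C_{ij}=\alpha_i\alpha_j$ for $i,j\in C$ (this is, up to scaling, the unique self-stress of the complete graph on $C$, i.e. $\sum_{j\in C}w^C_{ij}(p_i-p_j)=0$ for all $i\in C$). *)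

theory Defs
  imports "HOL-Analysis.Analysis"
begin

text \<open>Point configuration: points p 0, ..., p (n-1) in a Euclidean space of dimension d = DIM('a),
  indexed by {..<n}. Circuits are represented by index sets.\<close>

definition is_circuit :: "(nat \<Rightarrow> 'a::euclidean_space) \<Rightarrow> nat \<Rightarrow> nat set \<Rightarrow> bool" where
  "is_circuit p n C \<longleftrightarrow> C \<subseteq> {..<n} \<and> affine_dependent (p ` C) \<and>
      (\<forall>D. D \<subset> C \<longrightarrow> \<not> affine_dependent (p ` D))"

definition circuits :: "(nat \<Rightarrow> 'a::euclidean_space) \<Rightarrow> nat \<Rightarrow> nat set set" where
  "circuits p n = {C. is_circuit p n C}"

text \<open>An affine dependence on C with all coefficients nonzero (unique up to scaling for a circuit).\<close>
definition is_circuit_dependence :: "(nat \<Rightarrow> 'a::euclidean_space) \<Rightarrow> nat set \<Rightarrow> (nat \<Rightarrow> real) \<Rightarrow> bool" where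
  "is_circuit_dependence p C \<alpha> \<longleftrightarrow>
     (\<forall>i\<in>C. \<alpha> i \<noteq> 0) \<and> (\<Sum>i\<in>C. \<alpha> i) = 0 \<and> (\<Sum>i\<in>C. \<alpha> i *\<^sub>R p i) = 0"

definition circuit_coeff :: "(nat \<Rightarrow> 'a::euclidean_space) \<Rightarrow> nat set \<Rightarrow> nat \<Rightarrow> real" where
  "circuit_coeff p C = (SOME \<alpha>. is_circuit_dependence p C \<alpha>)"

definition circuit_weight :: "(nat \<Rightarrow> 'a::euclidean_space) \<Rightarrow> nat set \<Rightarrow> nat \<Rightarrow> nat \<Rightarrow> real" where
  "circuit_weight p C i j = circuit_coeff p C i * circuit_coeff p C j"

text \<open>R^(n choose 2): functions f i j, supported on pairs i < j < n.\<close>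
definition edge_space :: "nat \<Rightarrow> (nat \<Rightarrow> nat \<Rightarrow> real) set" where
  "edge_space n = {f. \<forall>i j. \<not> (i < j \<and> j < n) \<longrightarrow> f i j = 0}"

definition rigidity_map :: "(nat \<Rightarrow> 'a::euclidean_space) \<Rightarrow> nat \<Rightarrow> (nat \<Rightarrow> 'a) \<Rightarrow> (nat \<Rightarrow> nat \<Rightarrow> real)" where
  "rigidity_map p n v = (\<lambda>i j. if i < j \<and> j < n then inner (v i - v j) (p i - p j) else 0)"

definition image_M :: "(nat \<Rightarrow> 'a::euclidean_space) \<Rightarrow> nat \<Rightarrow> (nat \<Rightarrow> nat \<Rightarrow> real) set" where
  "image_M p n = range (rigidity_map p n)"

definition Delta_map :: "(nat \<Rightarrow> 'a::euclidean_space) \<Rightarrow> nat \<Rightarrow> (nat \<Rightarrow> nat \<Rightarrow> real) \<Rightarrow> nat set \<Rightarrow> real" where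
  "Delta_map p n f C = (\<Sum>(i,j)\<in>{(i,j). i \<in> C \<and> j \<in> C \<and> i < j}. circuit_weight p C i j * f i j)"

definition kernel_Delta :: "(nat \<Rightarrow> 'a::euclidean_space) \<Rightarrow> nat \<Rightarrow> (nat \<Rightarrow> nat \<Rightarrow> real) set" where
  "kernel_Delta p n = {f \<in> edge_space n. \<forall>C\<in>circuits p n. Delta_map p n f C = 0}"

end

theory Submission
  imports Defs
begin

(* For a circuit C with affine dependence alpha, the weights alpha_i alpha_j form a self-stress
   of the complete graph on C, so sum_{i,j in C} alpha_i alpha_j <v_i - v_j, p_i - p_j> = 0 for
   every velocity assignment v; this is Im M <= ker Delta.
   Conversely let S be d affinely independent points whose affine hull contains no other point.
   Arbitrary values on the edges meeting S are realised by some v: place the points of S one at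
   a time, then every other point q, each time solving a linear system whose rows p_q - p_s are
   linearly independent. Given f in ker Delta, subtract such a realisation; the remainder vanishes
   on the edges meeting S. For an edge ij avoiding S, the d + 2 points S, i, j are affinely
   dependent and contain a circuit through both i and j, whose Delta-coordinate reduces to
   w_ij f_ij with w_ij <> 0. *)

lemma inner_diff_diff_swap:
  fixes a b c d :: "'a::real_inner"
  shows "(a - b) \<bullet> (c - d) = (b - a) \<bullet> (d - c)"
  by (metis inner_minus_left inner_minus_right minus_diff_eq minus_minus)

lemma ex_inner_eq_on_independent:
  fixes u :: "'i \<Rightarrow> 'a::euclidean_space"
  assumes "inj_on u J" "independent (u ` J)"
  shows "\<exists>x. \<forall>j\<in>J. x \<bullet> u j = c j"
proof -
  obtain g :: "'a \<Rightarrow> real" where g: "linear g" "\<forall>y\<in>u ` J. g y = c (inv_into J u y)"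
    using linear_independent_extend[OF assms(2), of "\<lambda>y. c (inv_into J u y)"] by blast
  have "adjoint g 1 \<bullet> u j = c j" if "j \<in> J" for j
  proof -
    have "adjoint g 1 \<bullet> u j = g (u j) \<bullet> 1"
      by (metis adjoint_works[OF g(1)] inner_commute)
    also have "\<dots> = c j"
      using g(2) that assms(1) by simp
    finally show ?thesis .
  qed
  then show ?thesis by blast
qed

lemma ex_velocity_for_new_vertex:
  fixes p v :: "'i \<Rightarrow> 'a::euclidean_space"
  assumes "q \<notin> J" "inj_on p (insert q J)" "\<not> affine_dependent (p ` insert q J)"
  shows "\<exists>x. \<forall>j\<in>J. (x - v j) \<bullet> (p q - p j) = c j"
proof -
  have "p q \<notin> p ` J" using assms(1,2) by auto
  then have "independent ((\<lambda>y. y - p q) ` p ` J)"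
    using assms(3) affine_dependent_iff_dependent[of "p q" "p ` J"] by simp
  then have "independent ((\<lambda>j. p j - p q) ` J)" by (simp add: image_image)
  moreover have "inj_on (\<lambda>j. p j - p q) J" using assms(2) by (auto simp: inj_on_def)
  ultimately obtain x where "\<forall>j\<in>J. x \<bullet> (p j - p q) = - c j - v j \<bullet> (p q - p j)"
    using ex_inner_eq_on_independent[of _ J "\<lambda>j. - c j - v j \<bullet> (p q - p j)"] by blast
  then have "\<forall>j\<in>J. (x - v j) \<bullet> (p q - p j) = c j"
    by (simp add: inner_diff_left inner_diff_right algebra_simps)
  then show ?thesis ..
qed

lemma rigidity_surj_on_affine_independent:
  fixes p :: "'i \<Rightarrow> 'a::euclidean_space"
  assumes "finite T" "inj_on p T" "\<not> affine_dependent (p ` T)" "\<And>i j. g i j = g j i"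
  shows "\<exists>v. \<forall>i\<in>T. \<forall>j\<in>T. i \<noteq> j \<longrightarrow> (v i - v j) \<bullet> (p i - p j) = g i j"
  using assms(1-3)
proof (induction T rule: finite_induct)
  case empty
  show ?case by simp
next
  case (insert q T)
  have "\<not> affine_dependent (p ` T)"
    using insert.prems(2) affine_independent_subset[of "p ` insert q T" "p ` T"] by blast
  with insert.prems(1) obtain v where v: "\<forall>i\<in>T. \<forall>j\<in>T. i \<noteq> j \<longrightarrow> (v i - v j) \<bullet> (p i - p j) = g i j"
    using insert.IH by (meson inj_on_insert)
  obtain x where x: "\<forall>j\<in>T. (x - v j) \<bullet> (p q - p j) = g q j"
    using ex_velocity_for_new_vertex[OF insert.hyps(2) insert.prems] by blast
  have "((v(q := x)) i - (v(q := x)) j) \<bullet> (p i - p j) = g i j"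
    if ij: "i \<in> insert q T" "j \<in> insert q T" "i \<noteq> j" for i j
  proof -
    consider "i = q" "j \<in> T" | "j = q" "i \<in> T" | "i \<in> T" "j \<in> T"
      using ij by blast
    then show ?thesis
    proof cases
      case 1
      then show ?thesis using x insert.hyps(2) by auto
    next
      case 2
      then show ?thesis
        using x insert.hyps(2) assms(4)[of q i] inner_diff_diff_swap[of "v i" x] by auto
    next
      case 3
      then show ?thesis using v ij insert.hyps(2) by auto
    qed
  qed
  then show ?case by blast
qed

lemma rigidity_surj_on_star:
  fixes p :: "'i \<Rightarrow> 'a::euclidean_space"
  assumes "finite S" "S \<subseteq> V" "inj_on p V" "\<not> affine_dependent (p ` S)"
    and off_hull: "\<forall>q\<in>V - S. p q \<notin> affine hull (p ` S)"
    and sym: "\<And>i j. g i j = g j i"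
  shows "\<exists>v. \<forall>i\<in>V. \<forall>j\<in>V. i \<noteq> j \<longrightarrow> i \<in> S \<or> j \<in> S \<longrightarrow> (v i - v j) \<bullet> (p i - p j) = g i j"
proof -
  obtain v0 where v0: "\<forall>i\<in>S. \<forall>j\<in>S. i \<noteq> j \<longrightarrow> (v0 i - v0 j) \<bullet> (p i - p j) = g i j"
    using rigidity_surj_on_affine_independent[OF assms(1) _ assms(4) sym] assms(2,3)
    by (meson inj_on_subset)
  have "\<exists>x. \<forall>j\<in>S. (x - v0 j) \<bullet> (p q - p j) = g q j" if q: "q \<in> V - S" for q
  proof (rule ex_velocity_for_new_vertex)
    show "q \<notin> S" using q by blast
    show "inj_on p (insert q S)" using q assms(2,3) by (meson DiffD1 insert_subset inj_on_subset)
    show "\<not> affine_dependent (p ` insert q S)"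
      using affine_independent_insert[OF assms(4)] off_hull q by simp
  qed
  then obtain X where X: "\<forall>q\<in>V - S. \<forall>j\<in>S. (X q - v0 j) \<bullet> (p q - p j) = g q j"
    by metis
  define v where "v i = (if i \<in> S then v0 i else X i)" for i
  have "(v i - v j) \<bullet> (p i - p j) = g i j"
    if ij: "i \<in> V" "j \<in> V" "i \<noteq> j" "i \<in> S \<or> j \<in> S" for i j
  proof -
    consider "i \<notin> S" "j \<in> S" | "j \<notin> S" "i \<in> S" | "i \<in> S" "j \<in> S"
      using ij by blast
    then show ?thesis
    proof cases
      case 1
      then show ?thesis using X ij by (simp add: v_def)
    next
      case 2
      then show ?thesis
        using X ij sym[of i j] inner_diff_diff_swap[of "v0 i" "X j"] by (simp add: v_def)
    next
      case 3
      then show ?thesis using v0 ij by (simp add: v_def)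
    qed
  qed
  then show ?thesis by blast
qed

lemma circuit_subset: "is_circuit p n C \<Longrightarrow> C \<subseteq> {..<n}"
  by (simp add: is_circuit_def)

lemma circuit_finite: "is_circuit p n C \<Longrightarrow> finite C"
  by (rule finite_subset[OF circuit_subset]) simp_all

lemma ex_circuit_dependence:
  assumes C: "is_circuit p n C" and inj: "inj_on p C"
  shows "\<exists>\<alpha>. is_circuit_dependence p C \<alpha>"
proof -
  have fin: "finite C" using C by (rule circuit_finite)
  obtain U where U: "sum U (p ` C) = 0" "\<exists>y\<in>p ` C. U y \<noteq> 0" "(\<Sum>y\<in>p ` C. U y *\<^sub>R y) = 0"
    using C fin affine_dependent_explicit_finite[of "p ` C"] by (auto simp: is_circuit_def)
  define D where "D = {i\<in>C. U (p i) \<noteq> 0}"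
  have "affine_dependent (p ` D)"
  proof -
    have pD: "p ` D = {y\<in>p ` C. U y \<noteq> 0}" unfolding D_def by auto
    have drop_zero: "(if U y \<noteq> 0 then U y else 0) = U y"
      "(if U y \<noteq> 0 then U y *\<^sub>R y else 0) = U y *\<^sub>R y" for y
      by auto
    have "sum U (p ` D) = 0" "(\<Sum>y\<in>p ` D. U y *\<^sub>R y) = 0"
      using U(1,3) fin unfolding pD by (simp_all add: sum.inter_filter drop_zero)
    moreover have "\<exists>y\<in>p ` D. U y \<noteq> 0" using U(2) pD by auto
    moreover have "finite (p ` D)" using fin by (simp add: D_def)
    ultimately show ?thesis using affine_dependent_explicit_finite[of "p ` D"] by auto
  qed
  moreover have "D \<subseteq> C" unfolding D_def by auto
  ultimately have "D = C" using C unfolding is_circuit_def by auto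
  then have "is_circuit_dependence p C (\<lambda>i. U (p i))"
    unfolding is_circuit_dependence_def
    using U D_def sum.reindex[OF inj, of U] sum.reindex[OF inj, of "\<lambda>y. U y *\<^sub>R y"] by auto
  then show ?thesis by blast
qed

lemma circuit_coeff_is_circuit_dependence:
  assumes "is_circuit p n C" "inj_on p C"
  shows "is_circuit_dependence p C (circuit_coeff p C)"
  unfolding circuit_coeff_def using ex_circuit_dependence[OF assms] by (rule someI_ex)

lemma circuit_weight_nonzero:
  assumes "is_circuit p n C" "inj_on p C" "i \<in> C" "j \<in> C"
  shows "circuit_weight p C i j \<noteq> 0"
  using circuit_coeff_is_circuit_dependence[OF assms(1,2)] assms(3,4)
  unfolding circuit_weight_def is_circuit_dependence_def by simp

lemma affine_dependent_ex_circuit_subset: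
  assumes "T \<subseteq> {..<n}" "affine_dependent (p ` T)"
  shows "\<exists>C\<subseteq>T. is_circuit p n C"
proof -
  define F where "F = {D. D \<subseteq> T \<and> affine_dependent (p ` D)}"
  have "F \<subseteq> Pow T" unfolding F_def by blast
  moreover have "finite T" using assms(1) by (rule finite_subset) simp
  ultimately have "finite F" by (metis finite_Pow_iff rev_finite_subset)
  moreover have "T \<in> F" using assms(2) unfolding F_def by blast
  ultimately obtain C where C: "C \<in> F" "\<not> (\<exists>D\<in>F. D \<subset> C)"
    using ex_min_if_finite by blast
  then have "is_circuit p n C"
    using assms(1) unfolding F_def is_circuit_def by auto
  then show ?thesis using C(1) unfolding F_def by blast
qed

lemma ex_circuit_through_pair:
  fixes p :: "nat \<Rightarrow> 'a::euclidean_space"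
  assumes inj: "inj_on p {..<n}" and S: "S \<subseteq> {..<n}" "card S = DIM('a)" "\<not> affine_dependent (p ` S)"
    and off_hull: "\<forall>q\<in>{..<n} - S. p q \<notin> affine hull (p ` S)"
    and ij: "i \<in> {..<n} - S" "j \<in> {..<n} - S" "i \<noteq> j"
  shows "\<exists>C. is_circuit p n C \<and> i \<in> C \<and> j \<in> C \<and> C \<subseteq> insert i (insert j S)"
proof -
  have indep_insert: "\<not> affine_dependent (p ` insert q S)" if "q \<in> {..<n} - S" for q
    using affine_independent_insert[OF S(3)] off_hull that by simp
  have finS: "finite S" using S(1) by (rule finite_subset) simp
  have "card (p ` insert i (insert j S)) = DIM('a) + 2"
    using ij S(1,2) finS inj_on_subset[OF inj, of "insert i (insert j S)"]
    by (simp add: card_image)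
  then have "affine_dependent (p ` insert i (insert j S))"
    using affine_dependent_biggerset[of "p ` insert i (insert j S)"] finS by simp
  then obtain C where C: "C \<subseteq> insert i (insert j S)" "is_circuit p n C"
    using affine_dependent_ex_circuit_subset[of "insert i (insert j S)" n p] ij S(1) by auto
  have "i \<in> C"
    using C affine_independent_subset[OF indep_insert[OF ij(2)], of "p ` C"]
    unfolding is_circuit_def by blast
  moreover have "j \<in> C"
    using C affine_independent_subset[OF indep_insert[OF ij(1)], of "p ` C"]
    unfolding is_circuit_def by blast
  ultimately show ?thesis using C by blast
qed

lemma affine_dependence_self_stress:
  fixes p :: "'i \<Rightarrow> 'a::real_vector"
  assumes "(\<Sum>j\<in>C. \<alpha> j) = 0" "(\<Sum>j\<in>C. \<alpha> j *\<^sub>R p j) = 0"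
  shows "(\<Sum>j\<in>C. \<alpha> j *\<^sub>R (p i - p j)) = 0"
  using assms by (simp add: scaleR_diff_right sum_subtractf scaleR_sum_left[symmetric])

lemma affine_dependence_double_sum_eq_0:
  fixes p v :: "'i \<Rightarrow> 'a::real_inner"
  assumes "(\<Sum>j\<in>C. \<alpha> j) = 0" "(\<Sum>j\<in>C. \<alpha> j *\<^sub>R p j) = 0"
  shows "(\<Sum>i\<in>C. \<Sum>j\<in>C. \<alpha> i * \<alpha> j * ((v i - v j) \<bullet> (p i - p j))) = 0"
proof -
  have half: "(\<Sum>i\<in>C. \<Sum>j\<in>C. \<alpha> i * \<alpha> j * (v i \<bullet> (p i - p j))) = 0"
  proof -
    have "(\<Sum>j\<in>C. \<alpha> i * \<alpha> j * (v i \<bullet> (p i - p j))) = \<alpha> i * (v i \<bullet> (\<Sum>j\<in>C. \<alpha> j *\<^sub>R (p i - p j)))"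
      for i by (simp add: inner_sum_right sum_distrib_left mult.assoc)
    then show ?thesis using affine_dependence_self_stress[OF assms] by simp
  qed
  have "(v i - v j) \<bullet> (p i - p j) = v i \<bullet> (p i - p j) + v j \<bullet> (p j - p i)" for i j
    by (simp add: inner_diff_left inner_diff_right)
  then have "(\<Sum>i\<in>C. \<Sum>j\<in>C. \<alpha> i * \<alpha> j * ((v i - v j) \<bullet> (p i - p j)))
      = (\<Sum>i\<in>C. \<Sum>j\<in>C. \<alpha> i * \<alpha> j * (v i \<bullet> (p i - p j)))
        + (\<Sum>i\<in>C. \<Sum>j\<in>C. \<alpha> j * \<alpha> i * (v j \<bullet> (p j - p i)))"
    by (simp add: distrib_left sum.distrib mult.commute)
  also have "(\<Sum>i\<in>C. \<Sum>j\<in>C. \<alpha> j * \<alpha> i * (v j \<bullet> (p j - p i)))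
      = (\<Sum>i\<in>C. \<Sum>j\<in>C. \<alpha> i * \<alpha> j * (v i \<bullet> (p i - p j)))"
    by (rule sum.swap)
  finally show ?thesis using half by simp
qed

lemma sum_symmetric_eq_twice_sum_less:
  fixes h :: "'i::linorder \<Rightarrow> 'i \<Rightarrow> real"
  assumes "finite C" "\<And>i j. h i j = h j i" "\<And>i. h i i = 0"
  shows "(\<Sum>i\<in>C. \<Sum>j\<in>C. h i j) = 2 * (\<Sum>(i, j)\<in>{(i, j). i \<in> C \<and> j \<in> C \<and> i < j}. h i j)"
proof -
  define L where "L = {(i, j). i \<in> C \<and> j \<in> C \<and> i < j}"
  define G where "G = {(i, j). i \<in> C \<and> j \<in> C \<and> j < i}"
  define D where "D = {(i, j). i \<in> C \<and> j \<in> C \<and> i = j}"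
  have CC: "C \<times> C = L \<union> G \<union> D" unfolding L_def G_def D_def by auto
  have fin: "finite L" "finite G" "finite D"
    using finite_cartesian_product[OF assms(1) assms(1)] CC by (simp_all add: finite_Un)
  have "(\<Sum>i\<in>C. \<Sum>j\<in>C. h i j) = (\<Sum>(i, j)\<in>C \<times> C. h i j)"
    by (simp add: sum.cartesian_product)
  also have "\<dots> = (\<Sum>(i, j)\<in>L. h i j) + (\<Sum>(i, j)\<in>G. h i j) + (\<Sum>(i, j)\<in>D. h i j)"
  proof -
    have "L \<inter> G = {}" "(L \<union> G) \<inter> D = {}" unfolding L_def G_def D_def by auto
    then show ?thesis unfolding CC using fin by (simp add: sum.union_disjoint)
  qed
  also have "(\<Sum>(i, j)\<in>D. h i j) = 0"
    using assms(3) unfolding D_def by (intro sum.neutral) auto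
  also have "(\<Sum>(i, j)\<in>G. h i j) = (\<Sum>(i, j)\<in>L. h i j)"
  proof -
    have "G = prod.swap ` L" unfolding G_def L_def by auto
    then show ?thesis by (simp add: sum.reindex case_prod_beta assms(2))
  qed
  finally show ?thesis unfolding L_def by simp
qed

lemma Delta_map_rigidity_map:
  assumes "C \<in> circuits p n" "inj_on p C"
  shows "Delta_map p n (rigidity_map p n v) C = 0"
proof -
  have C: "is_circuit p n C" using assms(1) by (simp add: circuits_def)
  have fin: "finite C" using C by (rule circuit_finite)
  define \<alpha> where "\<alpha> = circuit_coeff p C"
  have dep: "is_circuit_dependence p C \<alpha>"
    unfolding \<alpha>_def using C assms(2) by (rule circuit_coeff_is_circuit_dependence)
  define h where "h i j = \<alpha> i * \<alpha> j * ((v i - v j) \<bullet> (p i - p j))" for i j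
  have "Delta_map p n (rigidity_map p n v) C = (\<Sum>(i, j)\<in>{(i, j). i \<in> C \<and> j \<in> C \<and> i < j}. h i j)"
    unfolding Delta_map_def rigidity_map_def circuit_weight_def h_def \<alpha>_def
    using circuit_subset[OF C] by (intro sum.cong) auto
  also have "\<dots> = (\<Sum>i\<in>C. \<Sum>j\<in>C. h i j) / 2"
    by (subst sum_symmetric_eq_twice_sum_less[OF fin]) (auto simp: h_def algebra_simps inner_commute)
  also have "(\<Sum>i\<in>C. \<Sum>j\<in>C. h i j) = 0"
    unfolding h_def using dep affine_dependence_double_sum_eq_0
    unfolding is_circuit_dependence_def by blast
  finally show ?thesis by simp
qed

lemma Delta_map_diff:
  "Delta_map p n (\<lambda>i j. f i j - g i j) C = Delta_map p n f C - Delta_map p n g C"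
  unfolding Delta_map_def by (simp add: sum_subtractf[symmetric] right_diff_distrib case_prod_beta)

lemma Delta_map_single_pair:
  assumes "finite C" "i \<in> C" "j \<in> C" "i < j"
    and "\<And>a b. a \<in> C \<Longrightarrow> b \<in> C \<Longrightarrow> a < b \<Longrightarrow> (a, b) \<noteq> (i, j) \<Longrightarrow> f a b = 0"
  shows "Delta_map p n f C = circuit_weight p C i j * f i j"
proof -
  have "finite {(a, b). a \<in> C \<and> b \<in> C \<and> a < b}"
    by (rule finite_subset[of _ "C \<times> C"]) (use assms(1) in auto)
  then have "Delta_map p n f C = (\<Sum>(a, b)\<in>{(i, j)}. circuit_weight p C a b * f a b)"
    unfolding Delta_map_def using assms by (intro sum.mono_neutral_right) fastforce+
  then show ?thesis by simp
qed

lemma image_M_subset_kernel_Delta: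
  assumes "inj_on p {..<n}"
  shows "image_M p n \<subseteq> kernel_Delta p n"
proof
  fix f assume "f \<in> image_M p n"
  then obtain v where f: "f = rigidity_map p n v" unfolding image_M_def by blast
  have "f \<in> edge_space n" unfolding f edge_space_def rigidity_map_def by auto
  moreover have "Delta_map p n f C = 0" if C: "C \<in> circuits p n" for C
  proof -
    have "inj_on p C"
      using C assms circuit_subset inj_on_subset by (metis circuits_def mem_Collect_eq)
    then show ?thesis unfolding f using C by (rule Delta_map_rigidity_map[rotated])
  qed
  ultimately show "f \<in> kernel_Delta p n" unfolding kernel_Delta_def by blast
qed

lemma kernel_Delta_eq_0_if_vanishing_on_star:
  fixes p :: "nat \<Rightarrow> 'a::euclidean_space"
  assumes inj: "inj_on p {..<n}"
    and S: "S \<subseteq> {..<n}" "card S = DIM('a)" "\<not> affine_dependent (p ` S)"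
    and off_hull: "\<forall>q\<in>{..<n} - S. p q \<notin> affine hull (p ` S)"
    and f: "f \<in> kernel_Delta p n"
    and vanish: "\<And>i j. i < j \<Longrightarrow> j < n \<Longrightarrow> i \<in> S \<or> j \<in> S \<Longrightarrow> f i j = 0"
  shows "f i j = 0"
proof (cases "i < j \<and> j < n \<and> i \<notin> S \<and> j \<notin> S")
  case False
  then show ?thesis
    using f vanish unfolding kernel_Delta_def edge_space_def by blast
next
  case True
  then obtain C where C: "is_circuit p n C" "i \<in> C" "j \<in> C" "C \<subseteq> insert i (insert j S)"
    using ex_circuit_through_pair[OF inj S off_hull, of i j] by auto
  have injC: "inj_on p C" using inj circuit_subset[OF C(1)] by (rule inj_on_subset)
  have "Delta_map p n f C = circuit_weight p C i j * f i j"
  proof (rule Delta_map_single_pair)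
    show "finite C" using C(1) by (rule circuit_finite)
    fix a b assume ab: "a \<in> C" "b \<in> C" "a < b" "(a, b) \<noteq> (i, j)"
    then have "a \<in> insert i (insert j S)" "b \<in> insert i (insert j S)" using C(4) by auto
    then have "a \<in> S \<or> b \<in> S" using ab(3,4) True by auto
    then show "f a b = 0" using vanish ab circuit_subset[OF C(1)] by blast
  qed (use C True in auto)
  moreover have "Delta_map p n f C = 0"
    using f C(1) unfolding kernel_Delta_def circuits_def by blast
  ultimately show ?thesis using circuit_weight_nonzero[OF C(1) injC C(2,3)] by simp
qed

lemma kernel_Delta_subset_image_M:
  fixes p :: "nat \<Rightarrow> 'a::euclidean_space"
  assumes inj: "inj_on p {..<n}"
    and S: "S \<subseteq> {..<n}" "card S = DIM('a)" "\<not> affine_dependent (p ` S)"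
    and off_hull: "\<forall>q\<in>{..<n} - S. p q \<notin> affine hull (p ` S)"
  shows "kernel_Delta p n \<subseteq> image_M p n"
proof
  fix f assume f: "f \<in> kernel_Delta p n"
  have "finite S" using S(1) by (rule finite_subset) simp
  then obtain v where v: "\<forall>i<n. \<forall>j<n. i \<noteq> j \<longrightarrow> i \<in> S \<or> j \<in> S \<longrightarrow>
      (v i - v j) \<bullet> (p i - p j) = f (min i j) (max i j)"
    using rigidity_surj_on_star[OF _ S(1) inj S(3) off_hull, of "\<lambda>i j. f (min i j) (max i j)"]
    by (auto simp: min.commute max.commute)
  define h where "h i j = f i j - rigidity_map p n v i j" for i j
  have "h \<in> kernel_Delta p n"
    using f image_M_subset_kernel_Delta[OF inj]
    unfolding h_def kernel_Delta_def edge_space_def image_M_def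
    by (auto simp: Delta_map_diff)
  moreover have "h i j = 0" if "i < j" "j < n" "i \<in> S \<or> j \<in> S" for i j
    using v that unfolding h_def rigidity_map_def by auto
  ultimately have "h i j = 0" for i j
    using kernel_Delta_eq_0_if_vanishing_on_star[OF inj S off_hull] by blast
  then have "f = rigidity_map p n v" unfolding h_def by fastforce
  then show "f \<in> image_M p n" unfolding image_M_def by blast
qed

theorem proposition6p1:
  fixes p :: "nat \<Rightarrow> 'a::euclidean_space" and n :: nat
  assumes inj: "inj_on p {..<n}"
    and span: "affine hull (p ` {..<n}) = UNIV"
  shows "image_M p n \<subseteq> kernel_Delta p n \<and>
         ((\<exists>S. S \<subseteq> {..<n} \<and> card S = DIM('a) \<and> \<not> affine_dependent (p ` S) \<and>
            (\<forall>i<n. p i \<in> affine hull (p ` S) \<longrightarrow> i \<in> S))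
         \<longrightarrow> image_M p n = kernel_Delta p n)"
proof (intro conjI impI)
  show sub: "image_M p n \<subseteq> kernel_Delta p n" using inj by (rule image_M_subset_kernel_Delta)
  assume "\<exists>S. S \<subseteq> {..<n} \<and> card S = DIM('a) \<and> \<not> affine_dependent (p ` S) \<and>
            (\<forall>i<n. p i \<in> affine hull (p ` S) \<longrightarrow> i \<in> S)"
  then obtain S where S: "S \<subseteq> {..<n}" "card S = DIM('a)" "\<not> affine_dependent (p ` S)"
    and off_hull: "\<forall>q\<in>{..<n} - S. p q \<notin> affine hull (p ` S)"
    by auto
  show "image_M p n = kernel_Delta p n"
    using sub kernel_Delta_subset_image_M[OF inj S off_hull] by (rule antisym)
qed

end
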